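(* Let $K\ge 1$ and $1\le K^{*}\le K$ be integers. Let $\alpha_1,\dots,\alpha_K$ be independent random variables with $\alpha_k\sim\mathrm{Bernoulli}(p_k)$, $p_k\in(0,1)$ for $k=1,\dots,K$, and write $\boldsymbol{\alpha}=(\alpha_1,\dots,\alpha_K)$. Let $R\in\{0,1\}$ be a response generated from the GDINA model (identity link) for an item whose required attributes are exactly the first $K^{*}$ attributes (i.e. its $Q$-matrix row is $\mathbf{q}=(1,\dots,1,0,\dots,0)$ with $K^{*}$ ones): $$P(R=1\mid\boldsymbol{\alpha})=\delta_0+\sum_{k=1}^{K^{*}}\delta_k\alpha_k+\sum_{1\le k<k'\le K^{*}}\delta_{kk'}\alpha_k\alpha_{k'}+\dots+\delta_{12\cdots K^{*}}\prod_{k=1}^{K^{*}}\alpha_k\in[0,1],$$ and assume the monotonicity condition: for every $k\in\{1,\dots,K^{*}\}$ and every configuration of the other attributes, acquiring attribute $\alpha_k$ (changing $\alpha_k$ from $0$ to $1$) strictly increases $P(R=1\mid\boldsymbol{\alpha})$. Then the mis-specified linear additive model of $R$ regressed on $(\alpha_1,\dots,\alpha_K)$ has mean function $\mathbb{E}^{*}[R\mid\boldsymbol{\alpha}]=\beta_0+\beta_1\alpha_1+\dots+\beta_K\alpha_K$ with $\beta_l\neq 0$ for $l=1,\dots,K^{*}$ and $\beta_k=0$ for $k=K^{*}+1,\dots,K$.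
   Context: The mis-specified linear additive model's mean function $\mathbb{E}^{*}[R\mid\boldsymbol{\alpha}]$ denotes the population linear regression (least squares) mean function of $R$ on $\alpha_1,\dots,\alpha_K$ with an intercept, i.e. $\beta_0+\sum_{k=1}^K\beta_k\alpha_k$ where $(\beta_0,\dots,\beta_K)$ minimize $\mathbb{E}\big[(R-\beta_0-\sum_{k=1}^K\beta_k\alpha_k)^2\big]$ under the joint distribution of $(\boldsymbol{\alpha},R)$ described. In the GDINA model, the sum runs over the intercept, main effects and all interaction terms among the required attributes $\alpha_1,\dots,\alpha_{K^{*}}$ with real coefficients. *)

theory Defs
  imports Complex_Main
begin

(* An attribute profile alpha = (alpha_1,...,alpha_K) in {0,1}^K is represented by the
   set A \<subseteq> {1..K} of mastered attributes: alpha_k = 1 iff k \<in> A. *)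

definition att :: "nat set \<Rightarrow> nat \<Rightarrow> real" where
  "att A k = (if k \<in> A then 1 else 0)"

definition prof_prob :: "nat \<Rightarrow> (nat \<Rightarrow> real) \<Rightarrow> nat set \<Rightarrow> real" where
  "prof_prob K p A = (\<Prod>k\<in>{1..K}. if k \<in> A then p k else 1 - p k)"

definition gdina :: "nat \<Rightarrow> (nat set \<Rightarrow> real) \<Rightarrow> nat set \<Rightarrow> real" where
  "gdina Ks \<delta> A = (\<Sum>S\<in>Pow {1..Ks}. \<delta> S * (\<Prod>k\<in>S. att A k))"

definition lin_pred :: "nat \<Rightarrow> real \<Rightarrow> (nat \<Rightarrow> real) \<Rightarrow> nat set \<Rightarrow> real" where
  "lin_pred K b0 b A = b0 + (\<Sum>k\<in>{1..K}. b k * att A k)"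

(* E[(R - b0 - sum_k b_k alpha_k)^2] under the joint law of (alpha, R), where
   P(R=1|alpha) = f alpha. *)
definition sq_loss :: "nat \<Rightarrow> (nat \<Rightarrow> real) \<Rightarrow> (nat set \<Rightarrow> real) \<Rightarrow> real \<Rightarrow> (nat \<Rightarrow> real) \<Rightarrow> real" where
  "sq_loss K p f b0 b = (\<Sum>A\<in>Pow {1..K}. prof_prob K p A *
      (f A * (1 - lin_pred K b0 b A)^2 + (1 - f A) * (0 - lin_pred K b0 b A)^2))"

definition is_pop_ls :: "nat \<Rightarrow> (nat \<Rightarrow> real) \<Rightarrow> (nat set \<Rightarrow> real) \<Rightarrow> real \<Rightarrow> (nat \<Rightarrow> real) \<Rightarrow> bool" where
  "is_pop_ls K p f b0 b = (\<forall>c0 c. sq_loss K p f b0 b \<le> sq_loss K p f c0 c)"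

end

theory Submission
  imports Defs
begin

text \<open>
  Because the attributes are independent, the least-squares coefficient of \<open>\<alpha>\<^sub>j\<close> is
  \<open>Cov(\<alpha>\<^sub>j, R) / Var(\<alpha>\<^sub>j)\<close>, and conditioning on \<open>\<alpha>\<^sub>j\<close> shows that
  \<open>Cov(\<alpha>\<^sub>j, h(\<alpha>)) = p\<^sub>j (1 - p\<^sub>j) E[h(\<alpha> with \<alpha>\<^sub>j = 1) - h(\<alpha> with \<alpha>\<^sub>j = 0)]\<close>.
  Hence \<open>\<beta>\<^sub>j\<close> is the average effect of acquiring attribute \<open>j\<close>: it is positive for
  the required attributes by monotonicity, and zero for the others because the GDINA response
  function does not depend on them.
\<close>

definition bernoulli_weight :: "'a set \<Rightarrow> ('a \<Rightarrow> real) \<Rightarrow> 'a set \<Rightarrow> real" where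
  "bernoulli_weight S p A = (\<Prod>k\<in>S. if k \<in> A then p k else 1 - p k)"

definition bernoulli_mean :: "'a set \<Rightarrow> ('a \<Rightarrow> real) \<Rightarrow> ('a set \<Rightarrow> real) \<Rightarrow> real" where
  "bernoulli_mean S p h = (\<Sum>A\<in>Pow S. bernoulli_weight S p A * h A)"

definition average_effect :: "'a set \<Rightarrow> ('a \<Rightarrow> real) \<Rightarrow> ('a set \<Rightarrow> real) \<Rightarrow> 'a \<Rightarrow> real" where
  "average_effect S p h j = bernoulli_mean (S - {j}) p (\<lambda>B. h (insert j B) - h B)"

lemma prof_prob_eq_bernoulli_weight: "prof_prob K p = bernoulli_weight {1..K} p"
  by (rule ext) (simp add: prof_prob_def bernoulli_weight_def)

lemma sum_Pow_remove:
  assumes "finite S" "j \<in> S"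
  shows "(\<Sum>A\<in>Pow S. h A) = (\<Sum>B\<in>Pow (S - {j}). h B + h (insert j B))"
proof -
  have "Pow S = Pow (S - {j}) \<union> insert j ` Pow (S - {j})"
    using Pow_insert[of j "S - {j}"] assms(2) by (simp add: insert_absorb)
  moreover have "Pow (S - {j}) \<inter> insert j ` Pow (S - {j}) = {}" by auto
  moreover have "inj_on (insert j) (Pow (S - {j}))"
    by (rule inj_onI) (metis Diff_iff PowD insert_ident singletonI subsetD)
  ultimately have "(\<Sum>A\<in>Pow S. h A) = (\<Sum>B\<in>Pow (S - {j}). h B) + (\<Sum>B\<in>Pow (S - {j}). h (insert j B))"
    using assms(1) by (simp add: sum.union_disjoint sum.reindex)
  then show ?thesis by (simp add: sum.distrib)
qed

lemma bernoulli_weight_remove: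
  assumes "finite S" "j \<in> S" "B \<subseteq> S - {j}"
  shows "bernoulli_weight S p B = (1 - p j) * bernoulli_weight (S - {j}) p B"
    and "bernoulli_weight S p (insert j B) = p j * bernoulli_weight (S - {j}) p B"
proof -
  have "j \<notin> B" using assms(3) by blast
  then show "bernoulli_weight S p B = (1 - p j) * bernoulli_weight (S - {j}) p B"
    using assms(1,2) by (simp add: bernoulli_weight_def prod.remove)
  have "(\<Prod>k\<in>S - {j}. if k \<in> insert j B then p k else 1 - p k) = bernoulli_weight (S - {j}) p B"
    unfolding bernoulli_weight_def by (rule prod.cong) auto
  then show "bernoulli_weight S p (insert j B) = p j * bernoulli_weight (S - {j}) p B"
    using assms(1,2) by (simp add: bernoulli_weight_def prod.remove)
qed

lemma bernoulli_weight_pos: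
  assumes "finite S" "\<And>k. k \<in> S \<Longrightarrow> 0 < p k \<and> p k < 1"
  shows "0 < bernoulli_weight S p A"
  unfolding bernoulli_weight_def using assms by (intro prod_pos) auto

lemma bernoulli_mean_cong:
  "(\<And>A. A \<subseteq> S \<Longrightarrow> g A = h A) \<Longrightarrow> bernoulli_mean S p g = bernoulli_mean S p h"
  unfolding bernoulli_mean_def by (rule sum.cong) auto

lemma bernoulli_mean_add:
  "bernoulli_mean S p (\<lambda>A. g A + h A) = bernoulli_mean S p g + bernoulli_mean S p h"
  by (simp add: bernoulli_mean_def distrib_left sum.distrib)

lemma bernoulli_mean_diff:
  "bernoulli_mean S p (\<lambda>A. g A - h A) = bernoulli_mean S p g - bernoulli_mean S p h"
  by (simp add: bernoulli_mean_def right_diff_distrib sum_subtractf)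

lemma bernoulli_mean_cmult:
  "bernoulli_mean S p (\<lambda>A. c * h A) = c * bernoulli_mean S p h"
  by (simp add: bernoulli_mean_def sum_distrib_left mult.left_commute)

lemma bernoulli_mean_sum:
  "bernoulli_mean S p (\<lambda>A. \<Sum>k\<in>I. g k A) = (\<Sum>k\<in>I. bernoulli_mean S p (g k))"
  unfolding bernoulli_mean_def sum_distrib_left by (rule sum.swap)

lemma bernoulli_mean_remove:
  assumes "finite S" "j \<in> S"
  shows "bernoulli_mean S p h =
    bernoulli_mean (S - {j}) p (\<lambda>B. (1 - p j) * h B + p j * h (insert j B))"
  unfolding bernoulli_mean_def sum_Pow_remove[OF assms]
  by (rule sum.cong) (auto simp: bernoulli_weight_remove[OF assms] algebra_simps)

lemma bernoulli_mean_const: "finite S \<Longrightarrow> bernoulli_mean S p (\<lambda>_. c) = c"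
proof (induction S rule: finite_induct)
  case empty
  then show ?case by (simp add: bernoulli_mean_def bernoulli_weight_def)
next
  case (insert x F)
  then have "bernoulli_mean (insert x F) p (\<lambda>_. c) = bernoulli_mean F p (\<lambda>_. (1 - p x) * c + p x * c)"
    using bernoulli_mean_remove[of "insert x F" x p] by simp
  also have "\<dots> = c" using insert.IH by (simp add: algebra_simps)
  finally show ?case .
qed

lemma bernoulli_mean_att_mult:
  assumes "finite S" "j \<in> S"
  shows "bernoulli_mean S p (\<lambda>A. att A j * h A) = p j * bernoulli_mean (S - {j}) p (\<lambda>B. h (insert j B))"
proof -
  have "bernoulli_mean S p (\<lambda>A. att A j * h A) = bernoulli_mean (S - {j}) p (\<lambda>B. p j * h (insert j B))"
    unfolding bernoulli_mean_remove[OF assms] by (rule bernoulli_mean_cong) (auto simp: att_def)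
  then show ?thesis by (simp add: bernoulli_mean_cmult)
qed

lemma bernoulli_mean_att:
  assumes "finite S" "j \<in> S"
  shows "bernoulli_mean S p (\<lambda>A. att A j) = p j"
  using bernoulli_mean_att_mult[OF assms, of p "\<lambda>_. 1"] assms(1) by (simp add: bernoulli_mean_const)

lemma bernoulli_mean_att_mult_eq:
  assumes "finite S" "j \<in> S"
  shows "bernoulli_mean S p (\<lambda>A. att A j * h A) =
    p j * bernoulli_mean S p h + p j * (1 - p j) * average_effect S p h j"
proof -
  have "bernoulli_mean S p h = (1 - p j) * bernoulli_mean (S - {j}) p h
      + p j * bernoulli_mean (S - {j}) p (\<lambda>B. h (insert j B))"
    using bernoulli_mean_remove[OF assms, of p h] by (simp add: bernoulli_mean_add bernoulli_mean_cmult)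
  then show ?thesis
    unfolding bernoulli_mean_att_mult[OF assms] average_effect_def bernoulli_mean_diff
    by (simp only:) (simp add: algebra_simps)
qed

lemma bernoulli_mean_pos:
  assumes "finite S" "\<And>k. k \<in> S \<Longrightarrow> 0 < p k \<and> p k < 1" "\<And>A. A \<subseteq> S \<Longrightarrow> 0 < h A"
  shows "0 < bernoulli_mean S p h"
  unfolding bernoulli_mean_def using assms bernoulli_weight_pos[OF assms(1,2)]
  by (intro sum_pos) auto

lemma bernoulli_mean_nonneg:
  assumes "finite S" "\<And>k. k \<in> S \<Longrightarrow> 0 < p k \<and> p k < 1" "\<And>A. A \<subseteq> S \<Longrightarrow> 0 \<le> h A"
  shows "0 \<le> bernoulli_mean S p h"
  unfolding bernoulli_mean_def using assms bernoulli_weight_pos[OF assms(1,2)]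
  by (intro sum_nonneg) (simp add: less_imp_le)

lemma bernoulli_mean_nonneg_eq_0_iff:
  assumes "finite S" "\<And>k. k \<in> S \<Longrightarrow> 0 < p k \<and> p k < 1" "\<And>A. A \<subseteq> S \<Longrightarrow> 0 \<le> h A"
  shows "bernoulli_mean S p h = 0 \<longleftrightarrow> (\<forall>A\<subseteq>S. h A = 0)"
proof -
  have w: "0 < bernoulli_weight S p A" for A
    using bernoulli_weight_pos[of S p] assms(1,2) by blast
  then have "\<forall>A\<in>Pow S. 0 \<le> bernoulli_weight S p A * h A"
    using assms(3) by (simp add: less_imp_le)
  then have "bernoulli_mean S p h = 0 \<longleftrightarrow> (\<forall>A\<in>Pow S. bernoulli_weight S p A * h A = 0)"
    unfolding bernoulli_mean_def using assms(1) by (intro sum_nonneg_eq_0_iff) auto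
  also have "\<dots> \<longleftrightarrow> (\<forall>A\<subseteq>S. h A = 0)"
    using less_imp_neq[OF w] by (simp add: Pow_def)
  finally show ?thesis .
qed

lemma average_effect_cong:
  assumes "\<And>A. A \<subseteq> S \<Longrightarrow> g A = h A" "j \<in> S"
  shows "average_effect S p g j = average_effect S p h j"
  unfolding average_effect_def
proof (rule bernoulli_mean_cong)
  fix A assume "A \<subseteq> S - {j}"
  then have "A \<subseteq> S" "insert j A \<subseteq> S" using assms(2) by auto
  then show "g (insert j A) - g A = h (insert j A) - h A" using assms(1) by simp
qed

lemma average_effect_diff:
  "average_effect S p (\<lambda>A. g A - h A) j = average_effect S p g j - average_effect S p h j"
  unfolding average_effect_def by (simp add: bernoulli_mean_diff[symmetric] algebra_simps)

lemma average_effect_pos: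
  assumes "finite S" "\<And>k. k \<in> S \<Longrightarrow> 0 < p k \<and> p k < 1"
    and "\<And>A. A \<subseteq> S - {j} \<Longrightarrow> h A < h (insert j A)"
  shows "0 < average_effect S p h j"
  unfolding average_effect_def using assms by (intro bernoulli_mean_pos) auto

lemma lin_pred_diff:
  "lin_pred K c0 c A - lin_pred K b0 b A = lin_pred K (c0 - b0) (\<lambda>k. c k - b k) A"
  unfolding lin_pred_def by (simp add: left_diff_distrib sum_subtractf)

lemma average_effect_lin_pred:
  assumes "finite S" "j \<in> {1..K}"
  shows "average_effect S p (lin_pred K b0 b) j = b j"
proof -
  have "lin_pred K b0 b (insert j B) - lin_pred K b0 b B = b j" if "j \<notin> B" for B
  proof -
    have "lin_pred K b0 b (insert j B) - lin_pred K b0 b B =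
        (\<Sum>k\<in>{1..K}. b k * (att (insert j B) k - att B k))"
      unfolding lin_pred_def by (simp add: sum_subtractf[symmetric] right_diff_distrib)
    also have "\<dots> = (\<Sum>k\<in>{1..K}. if k = j then b k else 0)"
      using that by (intro sum.cong) (auto simp: att_def)
    also have "\<dots> = b j" using assms(2) by simp
    finally show ?thesis .
  qed
  then have "bernoulli_mean (S - {j}) p (\<lambda>B. lin_pred K b0 b (insert j B) - lin_pred K b0 b B) =
      bernoulli_mean (S - {j}) p (\<lambda>_. b j)"
    by (intro bernoulli_mean_cong) auto
  then show ?thesis
    unfolding average_effect_def using assms(1) by (simp add: bernoulli_mean_const)
qed

lemma bernoulli_mean_lin_pred_mult:
  "bernoulli_mean S p (\<lambda>A. lin_pred K d0 d A * r A) =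
    d0 * bernoulli_mean S p r + (\<Sum>k\<in>{1..K}. d k * bernoulli_mean S p (\<lambda>A. att A k * r A))"
  unfolding lin_pred_def
  by (simp add: distrib_right sum_distrib_right bernoulli_mean_add bernoulli_mean_sum
      bernoulli_mean_cmult[symmetric] mult.assoc)

lemma sq_loss_eq_mean_sq_residual:
  "sq_loss K p f b0 b = bernoulli_mean {1..K} p (\<lambda>A. (lin_pred K b0 b A - f A)\<^sup>2)
    + bernoulli_mean {1..K} p (\<lambda>A. f A * (1 - f A))"
  unfolding sq_loss_def prof_prob_eq_bernoulli_weight bernoulli_mean_add[symmetric]
  unfolding bernoulli_mean_def
  by (rule sum.cong) (simp_all add: algebra_simps power2_eq_square)

lemma sq_loss_pythagoras:
  assumes "bernoulli_mean {1..K} p (\<lambda>A. lin_pred K b0 b A - f A) = 0"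
    and "\<And>k. k \<in> {1..K} \<Longrightarrow> bernoulli_mean {1..K} p (\<lambda>A. att A k * (lin_pred K b0 b A - f A)) = 0"
  shows "sq_loss K p f c0 c = sq_loss K p f b0 b +
    bernoulli_mean {1..K} p (\<lambda>A. (lin_pred K c0 c A - lin_pred K b0 b A)\<^sup>2)"
proof -
  let ?L = "lin_pred K b0 b" and ?M = "lin_pred K c0 c" and ?D = "lin_pred K (c0 - b0) (\<lambda>k. c k - b k)"
  have "(?M A - f A)\<^sup>2 = (?L A - f A)\<^sup>2 + (?M A - ?L A)\<^sup>2 + 2 * (?D A * (?L A - f A))" for A
    unfolding lin_pred_diff[symmetric] by (simp add: algebra_simps power2_eq_square)
  moreover have "bernoulli_mean {1..K} p (\<lambda>A. ?D A * (?L A - f A)) = 0"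
    unfolding bernoulli_mean_lin_pred_mult using assms by simp
  ultimately show ?thesis
    unfolding sq_loss_eq_mean_sq_residual by (simp add: bernoulli_mean_add bernoulli_mean_cmult)
qed

definition ls_intercept :: "nat \<Rightarrow> (nat \<Rightarrow> real) \<Rightarrow> (nat set \<Rightarrow> real) \<Rightarrow> real" where
  "ls_intercept K p f =
    bernoulli_mean {1..K} p f - (\<Sum>k\<in>{1..K}. p k * average_effect {1..K} p f k)"

lemma ls_residual_orthogonal:
  fixes K :: nat and p :: "nat \<Rightarrow> real" and f :: "nat set \<Rightarrow> real"
  defines "L \<equiv> lin_pred K (ls_intercept K p f) (average_effect {1..K} p f)"
  shows "bernoulli_mean {1..K} p (\<lambda>A. L A - f A) = 0"
    and "k \<in> {1..K} \<Longrightarrow> bernoulli_mean {1..K} p (\<lambda>A. att A k * (L A - f A)) = 0"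
proof -
  have "bernoulli_mean {1..K} p L =
      ls_intercept K p f + (\<Sum>k\<in>{1..K}. average_effect {1..K} p f k * p k)"
    using bernoulli_mean_lin_pred_mult[of "{1..K}" p K _ _ "\<lambda>_. 1"]
    by (simp add: L_def bernoulli_mean_const bernoulli_mean_att)
  then show mean: "bernoulli_mean {1..K} p (\<lambda>A. L A - f A) = 0"
    by (simp add: bernoulli_mean_diff ls_intercept_def mult.commute)
  assume k: "k \<in> {1..K}"
  then have "average_effect {1..K} p L k = average_effect {1..K} p f k"
    unfolding L_def by (simp add: average_effect_lin_pred)
  moreover have "bernoulli_mean {1..K} p (\<lambda>A. att A k * (L A - f A)) =
      p k * bernoulli_mean {1..K} p (\<lambda>A. L A - f A)
      + p k * (1 - p k) * average_effect {1..K} p (\<lambda>A. L A - f A) k"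
    using k by (intro bernoulli_mean_att_mult_eq) auto
  ultimately show "bernoulli_mean {1..K} p (\<lambda>A. att A k * (L A - f A)) = 0"
    unfolding mean average_effect_diff by simp
qed

lemma sq_loss_ls_decomposition:
  "sq_loss K p f c0 c = sq_loss K p f (ls_intercept K p f) (average_effect {1..K} p f) +
    bernoulli_mean {1..K} p (\<lambda>A. (lin_pred K c0 c A -
      lin_pred K (ls_intercept K p f) (average_effect {1..K} p f) A)\<^sup>2)"
  by (rule sq_loss_pythagoras) (rule ls_residual_orthogonal)+

lemma is_pop_ls_average_effect:
  assumes "\<And>k. k \<in> {1..K} \<Longrightarrow> 0 < p k \<and> p k < 1"
  shows "is_pop_ls K p f (ls_intercept K p f) (average_effect {1..K} p f)"
  unfolding is_pop_ls_def
proof (intro allI)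
  fix c0 c
  have "0 \<le> bernoulli_mean {1..K} p (\<lambda>A. (lin_pred K c0 c A -
      lin_pred K (ls_intercept K p f) (average_effect {1..K} p f) A)\<^sup>2)"
    using assms by (intro bernoulli_mean_nonneg) auto
  then show "sq_loss K p f (ls_intercept K p f) (average_effect {1..K} p f) \<le> sq_loss K p f c0 c"
    unfolding sq_loss_ls_decomposition[of K p f c0 c] by simp
qed

lemma is_pop_ls_imp_average_effect:
  assumes p: "\<And>k. k \<in> {1..K} \<Longrightarrow> 0 < p k \<and> p k < 1"
    and "is_pop_ls K p f c0 c" and k: "k \<in> {1..K}"
  shows "c k = average_effect {1..K} p f k"
proof -
  let ?L = "lin_pred K (ls_intercept K p f) (average_effect {1..K} p f)"
  have "sq_loss K p f c0 c \<le> sq_loss K p f (ls_intercept K p f) (average_effect {1..K} p f)"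
    using assms(2) unfolding is_pop_ls_def by blast
  moreover have "0 \<le> bernoulli_mean {1..K} p (\<lambda>A. (lin_pred K c0 c A - ?L A)\<^sup>2)"
    using p by (intro bernoulli_mean_nonneg) auto
  ultimately have "bernoulli_mean {1..K} p (\<lambda>A. (lin_pred K c0 c A - ?L A)\<^sup>2) = 0"
    unfolding sq_loss_ls_decomposition[of K p f c0 c] by simp
  then have "\<forall>A\<subseteq>{1..K}. lin_pred K c0 c A = ?L A"
    using bernoulli_mean_nonneg_eq_0_iff[of "{1..K}" p] p by simp
  then have "average_effect {1..K} p (lin_pred K c0 c) k = average_effect {1..K} p ?L k"
    using k by (intro average_effect_cong) auto
  then show ?thesis using k by (simp add: average_effect_lin_pred)
qed

lemma gdina_insert_not_required:
  assumes "j \<notin> {1..Ks}"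
  shows "gdina Ks \<delta> (insert j A) = gdina Ks \<delta> A"
  unfolding gdina_def
proof (rule sum.cong)
  fix S assume "S \<in> Pow {1..Ks}"
  then have "j \<notin> S" using assms by auto
  then have "(\<Prod>k\<in>S. att (insert j A) k) = (\<Prod>k\<in>S. att A k)"
    by (intro prod.cong) (auto simp: att_def)
  then show "\<delta> S * (\<Prod>k\<in>S. att (insert j A) k) = \<delta> S * (\<Prod>k\<in>S. att A k)"
    by simp
qed simp

lemma average_effect_gdina_not_required:
  "j \<notin> {1..Ks} \<Longrightarrow> average_effect S p (gdina Ks \<delta>) j = 0"
  by (simp add: average_effect_def gdina_insert_not_required bernoulli_mean_def)

theorem proposition2:
  fixes K Ks :: nat and p :: "nat \<Rightarrow> real" and \<delta> :: "nat set \<Rightarrow> real"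
  assumes "1 \<le> K" and "1 \<le> Ks" and "Ks \<le> K"
    and "\<And>k. k \<in> {1..K} \<Longrightarrow> 0 < p k \<and> p k < 1"
    and "\<And>A. A \<subseteq> {1..K} \<Longrightarrow> 0 \<le> gdina Ks \<delta> A \<and> gdina Ks \<delta> A \<le> 1"
    and "\<And>k A. k \<in> {1..Ks} \<Longrightarrow> A \<subseteq> {1..K} - {k} \<Longrightarrow>
           gdina Ks \<delta> A < gdina Ks \<delta> (insert k A)"
  shows "(\<exists>b0 b. is_pop_ls K p (gdina Ks \<delta>) b0 b) \<and>
         (\<forall>b0 b. is_pop_ls K p (gdina Ks \<delta>) b0 b \<longrightarrow>
            (\<forall>l\<in>{1..Ks}. b l \<noteq> 0) \<and> (\<forall>k\<in>{Ks+1..K}. b k = 0))"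
proof (intro conjI allI impI ballI)
  show "\<exists>b0 b. is_pop_ls K p (gdina Ks \<delta>) b0 b"
    using is_pop_ls_average_effect[of K p] assms(4) by blast
next
  fix b0 b l assume "is_pop_ls K p (gdina Ks \<delta>) b0 b" and l: "l \<in> {1..Ks}"
  then have "b l = average_effect {1..K} p (gdina Ks \<delta>) l"
    using is_pop_ls_imp_average_effect[of K p] assms(3,4) by simp
  also have "\<dots> > 0"
    using assms(4) assms(6)[OF l] by (intro average_effect_pos) auto
  finally show "b l \<noteq> 0" by simp
next
  fix b0 b k assume "is_pop_ls K p (gdina Ks \<delta>) b0 b" and k: "k \<in> {Ks+1..K}"
  then have "b k = average_effect {1..K} p (gdina Ks \<delta>) k"
    using is_pop_ls_imp_average_effect[of K p] assms(4) by simp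
  also have "\<dots> = 0" using k by (intro average_effect_gdina_not_required) auto
  finally show "b k = 0" .
qed

end
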